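(* Let $\gamma\in(0,1)$ and $\alpha_n=\gamma/(1+n\gamma)$ for $n\ge0$. Then for nonnegative integers $n,m$, \[ \mu_{n,m}=\begin{cases}\delta_{n,m}&\text{if } n\le m,\\ \dfrac{\gamma}{1+m\gamma}&\text{if } n>m.\end{cases} \]
   Context: For a polynomial $f(z)=\sum_{k=0}^n a_kz^k$ of degree $n$, write $\overline{f}(z)=\sum_k\overline{a_k}z^k$ and $f^*(z)=z^n\overline{f}(1/z)$. Given $(\alpha_n)$ with $|\alpha_n|<1$, define monic $\Phi_n$ by $\Phi_0=1$, $\Phi_{n+1}(z)=z\Phi_n(z)-\overline{\alpha_n}\Phi_n^*(z)$. Let $\mathcal{L}$ be the unique linear functional on Laurent polynomials with $\mathcal{L}(1)=1$ and $\mathcal{L}(\Phi_m(z)\overline{\Phi_n}(1/z))=0$ for $m\neq n$; set $\langle f,g\rangle=\mathcal{L}(f(z)\overline{g}(1/z))$ and $\mu_{n,m}=\langle\Phi_m(z),z^n\rangle/\langle\Phi_m,\Phi_m\rangle$. *)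

theory Defs
  imports Complex_Main "HOL-Computational_Algebra.Polynomial"
begin

text \<open>Reversed polynomial f*(z) = z^n conj-f(1/z), n = degree f.\<close>
definition pstar :: "complex poly \<Rightarrow> complex poly" where
  "pstar p = (\<Sum>k\<le>degree p. monom (cnj (coeff p (degree p - k))) k)"

fun Phi :: "(nat \<Rightarrow> complex) \<Rightarrow> nat \<Rightarrow> complex poly" where
  "Phi al 0 = 1"
| "Phi al (Suc n) = pCons 0 (Phi al n) - smult (cnj (al n)) (pstar (Phi al n))"

text \<open>A linear functional L on Laurent polynomials is determined by its moments
  c k = L(z^k), k an integer. Then
  <f,g> = L(f(z) conj-g(1/z)) = sum_{i,j} f_i conj(g_j) c(i-j).\<close>
definition ip :: "(int \<Rightarrow> complex) \<Rightarrow> complex poly \<Rightarrow> complex poly \<Rightarrow> complex" where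
  "ip c f g = (\<Sum>i\<le>degree f. \<Sum>j\<le>degree g.
      coeff f i * cnj (coeff g j) * c (int i - int j))"

definition mu :: "(int \<Rightarrow> complex) \<Rightarrow> (nat \<Rightarrow> complex) \<Rightarrow> nat \<Rightarrow> nat \<Rightarrow> complex" where
  "mu c al n m = ip c (Phi al m) (monom 1 n) / ip c (Phi al m) (Phi al m)"

end

theory Submission
  imports Defs
begin

text \<open>The reciprocals of \<open>\<alpha>\<^sub>n = \<gamma>/(1 + n\<gamma>)\<close> form an arithmetic progression with
  step 1, and this is exactly what makes the Szego recursion close up in the form
  \<open>\<Phi>\<^sub>m = z\<^sup>m - \<alpha>\<^bsub>m-1\<^esub> (1 + z + ... + z\<^bsup>m-1\<^esup>)\<close>. Orthogonality of \<open>\<Phi>\<^sub>m\<close> to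
  \<open>\<Phi>\<^sub>0 = 1\<close> from either side then forces the moments \<open>L(z\<^sup>k) = \<gamma>\<close> for all \<open>k \<noteq> 0\<close>.
  With these moments \<open>\<langle>\<Phi>\<^sub>m, z\<^sup>n\<rangle>\<close> is a fixed positive multiple of \<open>0\<close>, \<open>1 + m\<gamma>\<close> or \<open>\<gamma>\<close>
  according as \<open>n < m\<close>, \<open>n = m\<close> or \<open>n > m\<close>, and \<open>\<langle>\<Phi>\<^sub>m, \<Phi>\<^sub>m\<rangle> = \<langle>\<Phi>\<^sub>m, z\<^sup>m\<rangle>\<close> because \<open>\<Phi>\<^sub>m\<close>
  is monic.\<close>

lemma coeff_pstar:
  "coeff (pstar p) k = (if k \<le> degree p then cnj (coeff p (degree p - k)) else 0)"
  unfolding pstar_def by (simp add: coeff_sum)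

lemma degree_pstar_le: "degree (pstar p) \<le> degree p"
  by (rule degree_le) (simp add: coeff_pstar)

lemma degree_and_lead_coeff_Phi: "degree (Phi al n) = n \<and> coeff (Phi al n) n = 1"
proof (induction n)
  case 0
  then show ?case by simp
next
  case (Suc n)
  let ?P = "Phi al n"
  have "degree (smult (cnj (al n)) (pstar ?P)) < degree (pCons 0 ?P)"
    using Suc.IH degree_pstar_le[of ?P] by (auto simp: le_less_Suc_eq)
  then have "degree (pCons 0 ?P + - smult (cnj (al n)) (pstar ?P)) = Suc n"
    using Suc.IH by (subst degree_add_eq_left) auto
  then have "degree (Phi al (Suc n)) = Suc n"
    by simp
  moreover have "coeff (Phi al (Suc n)) (Suc n) = 1"
    using Suc.IH by (simp add: coeff_pstar)
  ultimately show ?case ..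
qed

lemma degree_Phi [simp]: "degree (Phi al n) = n"
  using degree_and_lead_coeff_Phi by blast

lemma Phi_monic [simp]: "coeff (Phi al n) n = 1"
  using degree_and_lead_coeff_Phi by simp

context
  fixes al :: "nat \<Rightarrow> complex"
  assumes real: "\<And>n. cnj (al n) = al n"
    and recip: "\<And>n. al (Suc n) * (1 + al n) = al n" \<comment> \<open>i.e. \<open>1/\<alpha>\<^sub>n\<^sub>+\<^sub>1 = 1/\<alpha>\<^sub>n + 1\<close>\<close>
begin

lemma coeff_Phi:
  shows "coeff (Phi al n) k = (if k = n then 1 else if k < n then - al (n - 1) else 0)"
proof (induction n arbitrary: k)
  case 0
  then show ?case by simp
next
  case (Suc n)
  show ?case
  proof (cases k)
    case 0
    then show ?thesis using Suc.IH by (simp add: coeff_pstar real)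
  next
    case (Suc k')
    consider "k' < n" | "k' = n" | "n < k'" by linarith
    then show ?thesis
    proof cases
      case 1
      have "al n * al (n - 1) - al (n - 1) = - al n"
        using recip[of "n - 1"] 1 by (simp add: algebra_simps)
      then show ?thesis using 1 Suc.IH \<open>k = Suc k'\<close> by (auto simp: coeff_pstar real)
    qed (use Suc.IH \<open>k = Suc k'\<close> in \<open>auto simp: coeff_pstar\<close>)
  qed
qed

lemma cnj_coeff_Phi: "cnj (coeff (Phi al n) k) = coeff (Phi al n) k"
  by (simp add: coeff_Phi real)

lemma sum_coeff_Phi: "(\<Sum>i\<le>m. coeff (Phi al m) i * f i) = f m - al (m - 1) * (\<Sum>i<m. f i)"
proof -
  have "(\<Sum>i\<le>m. coeff (Phi al m) i * f i) = (\<Sum>i<m. - al (m - 1) * f i) + f m"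
    unfolding lessThan_Suc_atMost[symmetric] sum.lessThan_Suc by (simp add: coeff_Phi)
  then show ?thesis
    by (simp add: sum_distrib_left sum_negf)
qed

end

lemma harmonic_alpha:
  fixes \<gamma> :: real
  assumes "0 \<le> \<gamma>" and al: "\<And>n. al n = complex_of_real (\<gamma> / (1 + real n * \<gamma>))"
  shows "cnj (al n) = al n" and "al (Suc n) * (1 + al n) = al n"
proof -
  show "cnj (al n) = al n"
    unfolding al by simp
  have "1 + real n * \<gamma> > 0" and "1 + real (Suc n) * \<gamma> > 0"
    using assms(1) by (simp_all add: add_pos_nonneg)
  moreover have "1 + \<gamma> / (1 + real n * \<gamma>) = (1 + real (Suc n) * \<gamma>) / (1 + real n * \<gamma>)"
    using \<open>1 + real n * \<gamma> > 0\<close> by (simp add: field_simps)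
  ultimately have "\<gamma> / (1 + real (Suc n) * \<gamma>) * (1 + \<gamma> / (1 + real n * \<gamma>)) = \<gamma> / (1 + real n * \<gamma>)"
    by simp
  then show "al (Suc n) * (1 + al n) = al n"
    unfolding al by (metis of_real_1 of_real_add of_real_mult)
qed

lemma sum_if_eq_lessThan:
  "(\<Sum>i<m. if i = n then 1 else g) = of_nat m * g + (if n < m then 1 - g else (0::'a::comm_ring_1))"
  by (induction m) (auto simp: algebra_simps)

lemma moments_from_recursion:
  fixes \<gamma> :: real and e :: "nat \<Rightarrow> complex"
  assumes "0 \<le> \<gamma>" and al: "\<And>n. al n = complex_of_real (\<gamma> / (1 + real n * \<gamma>))"
    and e0: "e 0 = 1" and e_Suc: "\<And>m. e (Suc m) = al m * (\<Sum>i\<le>m. e i)"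
  shows "e k = complex_of_real (if k = 0 then 1 else \<gamma>)"
proof (induction k rule: less_induct)
  case (less k)
  show ?case
  proof (cases k)
    case 0
    then show ?thesis using e0 by simp
  next
    case (Suc m)
    have pos: "1 + real m * \<gamma> > 0"
      using assms(1) by (intro add_pos_nonneg) auto
    have "(\<Sum>i\<le>m. e i) = (\<Sum>i<Suc m. complex_of_real (if i = 0 then 1 else \<gamma>))"
      unfolding lessThan_Suc_atMost using less Suc by (intro sum.cong) auto
    also have "\<dots> = complex_of_real (\<Sum>i<Suc m. if i = 0 then 1 else \<gamma>)"
      by (simp only: of_real_sum)
    also have "\<dots> = complex_of_real (1 + real m * \<gamma>)"
      by (simp only: sum_if_eq_lessThan) (simp add: algebra_simps)
    finally have sum_e: "(\<Sum>i\<le>m. e i) = complex_of_real (1 + real m * \<gamma>)" .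
    have "e k = complex_of_real (\<gamma> / (1 + real m * \<gamma>) * (1 + real m * \<gamma>))"
      unfolding Suc e_Suc sum_e al of_real_mult ..
    also have "\<dots> = complex_of_real \<gamma>"
      using pos by simp
    finally show ?thesis
      using Suc by simp
  qed
qed

lemma ip_monom_right: "ip c p (monom 1 n) = (\<Sum>i\<le>degree p. coeff p i * c (int i - int n))"
proof -
  have "coeff p i * cnj (coeff (monom 1 n) j) * c (int i - int j)
      = (if j = n then coeff p i * c (int i - int n) else 0)" for i j
    by simp
  then show ?thesis
    unfolding ip_def by (simp add: degree_monom_eq)
qed

lemma ip_one_left: "ip c 1 q = (\<Sum>j\<le>degree q. cnj (coeff q j) * c (- int j))"
  unfolding ip_def by simp

lemma ip_expand_right: "ip c p q = (\<Sum>j\<le>degree q. cnj (coeff q j) * ip c p (monom 1 j))"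
  unfolding ip_monom_right unfolding ip_def
  by (subst sum.swap) (simp add: sum_distrib_left algebra_simps)

lemma moments:
  fixes \<gamma> :: real
  assumes "0 \<le> \<gamma>" and "\<And>n. al n = complex_of_real (\<gamma> / (1 + real n * \<gamma>))"
    and c0: "c 0 = 1"
    and orth_right: "\<And>m. 0 < m \<Longrightarrow> ip c (Phi al m) 1 = 0"
    and orth_left: "\<And>m. 0 < m \<Longrightarrow> ip c 1 (Phi al m) = 0"
  shows "c k = complex_of_real (if k = 0 then 1 else \<gamma>)"
proof -
  note real = harmonic_alpha(1)[OF assms(1,2)] and recip = harmonic_alpha(2)[OF assms(1,2)]
  note sum_coeff = sum_coeff_Phi[of al, OF real recip]
  have nonneg: "c (int i) = complex_of_real (if i = 0 then 1 else \<gamma>)" for i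
  proof (rule moments_from_recursion[OF assms(1,2)])
    show "c (int 0) = 1" using c0 by simp
    fix m
    have "0 = ip c (Phi al (Suc m)) (monom 1 0)"
      using orth_right[of "Suc m"] by simp
    also have "\<dots> = c (int (Suc m)) - al m * (\<Sum>i\<le>m. c (int i))"
      unfolding ip_monom_right degree_Phi sum_coeff by (simp add: lessThan_Suc_atMost)
    finally show "c (int (Suc m)) = al m * (\<Sum>i\<le>m. c (int i))" by simp
  qed
  have nonpos: "c (- int i) = complex_of_real (if i = 0 then 1 else \<gamma>)" for i
  proof (rule moments_from_recursion[OF assms(1,2)])
    show "c (- int 0) = 1" using c0 by simp
    fix m
    have "0 = ip c 1 (Phi al (Suc m))"
      using orth_left[of "Suc m"] by simp
    also have "\<dots> = c (- int (Suc m)) - al m * (\<Sum>i\<le>m. c (- int i))"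
      unfolding ip_one_left degree_Phi cnj_coeff_Phi[of al, OF real recip] sum_coeff
      by (simp add: lessThan_Suc_atMost)
    finally show "c (- int (Suc m)) = al m * (\<Sum>i\<le>m. c (- int i))" by simp
  qed
  show ?thesis
    by (cases k rule: int_cases2) (use nonneg nonpos in auto)
qed

lemma ip_Phi_monom:
  fixes \<gamma> :: real
  assumes "0 \<le> \<gamma>" and "\<gamma> < 1" and al: "\<And>n. al n = complex_of_real (\<gamma> / (1 + real n * \<gamma>))"
    and moments: "\<And>k. c k = complex_of_real (if k = 0 then 1 else \<gamma>)"
  shows "ip c (Phi al m) (monom 1 n) = complex_of_real ((1 - \<gamma>) / (1 + real m * \<gamma> - \<gamma>) *
           (if n < m then 0 else if n = m then 1 + real m * \<gamma> else \<gamma>))"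
proof -
  note real = harmonic_alpha(1)[OF assms(1,3)] and recip = harmonic_alpha(2)[OF assms(1,3)]
  have "(\<Sum>i<m. c (int i - int n)) = complex_of_real (\<Sum>i<m. if i = n then 1 else \<gamma>)"
    unfolding moments of_real_sum by simp
  also have "\<dots> = complex_of_real (real m * \<gamma> + (if n < m then 1 - \<gamma> else 0))"
    by (simp only: sum_if_eq_lessThan)
  finally have "ip c (Phi al m) (monom 1 n) = complex_of_real ((if m = n then 1 else \<gamma>) -
      \<gamma> / (1 + real (m - 1) * \<gamma>) * (real m * \<gamma> + (if n < m then 1 - \<gamma> else 0)))"
    unfolding ip_monom_right degree_Phi sum_coeff_Phi[of al, OF real recip] al
    by (simp add: moments)
  also have "\<dots> = complex_of_real ((1 - \<gamma>) / (1 + real m * \<gamma> - \<gamma>) *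
           (if n < m then 0 else if n = m then 1 + real m * \<gamma> else \<gamma>))"
  proof (cases m)
    case 0
    then show ?thesis using assms(2) by simp
  next
    case (Suc m')
    have "1 + real m' * \<gamma> > 0"
      using assms(1) by (intro add_pos_nonneg) auto
    then show ?thesis
      unfolding Suc by (auto simp: field_simps)
  qed
  finally show ?thesis .
qed

lemma ip_monic_right:
  assumes "lead_coeff q = 1" and "\<And>j. j < degree q \<Longrightarrow> ip c p (monom 1 j) = 0"
  shows "ip c p q = ip c p (monom 1 (degree q))"
  unfolding ip_expand_right[of c p q] lessThan_Suc_atMost[symmetric] sum.lessThan_Suc
  using assms by simp

theorem proposition4p5:
  fixes \<gamma> :: real and al :: "nat \<Rightarrow> complex" and c :: "int \<Rightarrow> complex"
  assumes "0 < \<gamma>" and "\<gamma> < 1"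
    and "\<And>n. al n = complex_of_real (\<gamma> / (1 + real n * \<gamma>))"
    and "c 0 = 1"
    and "\<And>m n. m \<noteq> n \<Longrightarrow> ip c (Phi al m) (Phi al n) = 0"
  shows "mu c al n m =
           (if n \<le> m then (if n = m then 1 else 0)
            else complex_of_real (\<gamma> / (1 + real m * \<gamma>)))"
proof -
  define \<kappa> where "\<kappa> = (1 - \<gamma>) / (1 + real m * \<gamma> - \<gamma>)"
  have "0 \<le> \<gamma>" using assms(1) by simp
  have "c k = complex_of_real (if k = 0 then 1 else \<gamma>)" for k
    by (rule moments[of \<gamma> al c, OF \<open>0 \<le> \<gamma>\<close> assms(3,4)]) (use assms(5)[of _ 0] assms(5)[of 0] in auto)
  then have ip_monom: "ip c (Phi al m) (monom 1 j) = complex_of_real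
      (\<kappa> * (if j < m then 0 else if j = m then 1 + real m * \<gamma> else \<gamma>))" for j
    unfolding \<kappa>_def by (rule ip_Phi_monom[of \<gamma> al c, OF \<open>0 \<le> \<gamma>\<close> assms(2,3)])
  have norm: "ip c (Phi al m) (Phi al m) = complex_of_real (\<kappa> * (1 + real m * \<gamma>))"
    by (subst ip_monic_right) (simp_all add: ip_monom)
  have "real m * \<gamma> \<ge> 0"
    using \<open>0 \<le> \<gamma>\<close> by simp
  then have "\<kappa> > 0" and "1 + real m * \<gamma> > 0"
    using assms(2) unfolding \<kappa>_def by (auto intro!: divide_pos_pos)
  then have "\<kappa> * (if n < m then 0 else if n = m then 1 + real m * \<gamma> else \<gamma>) / (\<kappa> * (1 + real m * \<gamma>))
      = (if n \<le> m then (if n = m then 1 else 0) else \<gamma> / (1 + real m * \<gamma>))"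
    by auto
  then show ?thesis
    unfolding mu_def ip_monom norm of_real_divide[symmetric] by simp
qed

end
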